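(* Let $q$ be a power of $2$ and $n\ge1$ an integer with $\gcd(n+1,q)=1$. If $q>n/2$, then there exists $a\in\mathbb{F}_q$ such that $C_n(a)$ is LCD.
   Context: For $a\in\mathbb{F}_q$ and $n \ge 1$, $T_n(a)$ denotes the $n\times n$ symmetric tridiagonal Toeplitz matrix over $\mathbb{F}_q$ with all diagonal entries equal to $a$, all entries on the first super- and sub-diagonals equal to $1$, and all other entries $0$. $C_n(a)$ is the $[2n,n]$ linear code over $\mathbb{F}_q$ with generator matrix $[I_n \mid T_n(a)]$. A linear code $C$ is LCD if $C\cap C^\perp=\{0\}$ (Euclidean dual). *)

theory Defs
  imports Complex_Main
begin

text \<open>Vectors of length N over a field are modelled as functions nat => 'a
  that vanish at all indices >= N; matrices as functions nat => nat => 'a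
  (only entries with indices below the dimension matter).\<close>

definition tridiag :: "nat \<Rightarrow> 'a::field \<Rightarrow> nat \<Rightarrow> nat \<Rightarrow> 'a" where
  "tridiag n a i j = (if i < n \<and> j < n then
       (if i = j then a else if i = j + 1 \<or> j = i + 1 then 1 else 0) else 0)"

definition gen_matrix :: "nat \<Rightarrow> 'a::field \<Rightarrow> nat \<Rightarrow> nat \<Rightarrow> 'a" where
  "gen_matrix n a i j = (if j < n then (if i = j then 1 else 0) else tridiag n a i (j - n))"

definition code_gen :: "nat \<Rightarrow> nat \<Rightarrow> (nat \<Rightarrow> nat \<Rightarrow> 'a::field) \<Rightarrow> (nat \<Rightarrow> 'a) set" where
  "code_gen k N G = {c. \<exists>m::nat \<Rightarrow> 'a. c = (\<lambda>j. if j < N then (\<Sum>i<k. m i * G i j) else 0)}"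

definition C_code :: "nat \<Rightarrow> 'a::field \<Rightarrow> (nat \<Rightarrow> 'a) set" where
  "C_code n a = code_gen n (2 * n) (gen_matrix n a)"

definition dual_code :: "nat \<Rightarrow> (nat \<Rightarrow> 'a::field) set \<Rightarrow> (nat \<Rightarrow> 'a) set" where
  "dual_code N C = {v. (\<forall>j\<ge>N. v j = 0) \<and> (\<forall>c\<in>C. (\<Sum>j<N. v j * c j) = 0)}"

definition is_LCD :: "nat \<Rightarrow> (nat \<Rightarrow> 'a::field) set \<Rightarrow> bool" where
  "is_LCD N C \<longleftrightarrow> C \<inter> dual_code N C = {(\<lambda>_. 0)}"

end

theory Submission
  imports Defs "HOL-Number_Theory.Residues"
begin

text \<open>A field with 2^k elements has characteristic 2, and then gcd (n+1) q = 1 forces n to be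
  even. Take a = 1. In characteristic 2 one has T = I + P, with P the adjacency matrix of the path
  on n vertices, so G G^T = I + T^2 = P^2, and a codeword (m, T m) orthogonal to every row of G
  satisfies P^2 m = 0. For a path with an even number of vertices P is injective: the equations
  (P v)_j = 0 kill the odd entries of v from the left end and, by reflection, the even entries
  from the right end.\<close>

definition path_adj :: "nat \<Rightarrow> (nat \<Rightarrow> 'a::field) \<Rightarrow> nat \<Rightarrow> 'a" where
  "path_adj n v j = (if 0 < j then v (j - 1) else 0) + (if j + 1 < n then v (j + 1) else 0)"

lemma path_adj_add: "path_adj n (\<lambda>j. v j + w j) k = path_adj n v k + path_adj n w k"
  by (simp add: path_adj_def algebra_simps)

lemma path_adj_cong:
  assumes "\<And>j. j < n \<Longrightarrow> v j = w j" and "k < n"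
  shows "path_adj n v k = path_adj n w k"
  using assms by (simp add: path_adj_def)

lemma path_adj_reflect:
  assumes "j < n"
  shows "path_adj n (\<lambda>i. v (n - 1 - i)) j = path_adj n v (n - 1 - j)"
proof -
  have "n - 1 - (j - 1) = n - j" "n - 1 - (j + 1) = n - 1 - j - 1" "n - 1 - j + 1 = n - j"
    if "0 < j" using that assms by auto
  with assms show ?thesis
    by (cases "0 < j"; cases "j + 1 < n") (auto simp: path_adj_def add.commute)
qed

lemma path_adj_kernel_odd:
  assumes ker: "\<And>j. j < n \<Longrightarrow> path_adj n v j = 0"
  shows "2 * k + 1 < n \<Longrightarrow> v (2 * k + 1) = 0"
proof (induction k)
  case 0
  show ?case using ker[of 0] 0 by (simp add: path_adj_def)
next
  case (Suc k)
  have "v (2 * k + 1) + v (2 * k + 3) = 0"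
    using ker[of "2 * k + 2"] Suc.prems by (simp add: path_adj_def numeral_3_eq_3)
  with Suc show ?case by (simp add: numeral_3_eq_3)
qed

lemma path_adj_kernel_even_length:
  assumes "even n" and ker: "\<And>j. j < n \<Longrightarrow> path_adj n v j = 0" and "i < n"
  shows "v i = 0"
proof (cases "odd i")
  case True
  then obtain k where "i = 2 * k + 1" by (rule oddE)
  with \<open>i < n\<close> show ?thesis using path_adj_kernel_odd[OF ker] by blast
next
  case False
  define w where "w = (\<lambda>i. v (n - 1 - i))"
  have "path_adj n w j = 0" if "j < n" for j
    using that ker[of "n - 1 - j"] path_adj_reflect[OF that, of v] by (simp add: w_def)
  moreover have "odd (n - 1 - i)"
    using False \<open>even n\<close> \<open>i < n\<close> by presburger
  then obtain k where k: "n - 1 - i = 2 * k + 1" by (rule oddE)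
  ultimately have "w (2 * k + 1) = 0"
    using path_adj_kernel_odd[of n w k] \<open>i < n\<close> by fastforce
  moreover have "n - 1 - (2 * k + 1) = i" using k \<open>i < n\<close> by simp
  ultimately show ?thesis by (simp add: w_def)
qed

lemma tridiag_sym: "tridiag n a i j = tridiag n a j i"
  by (auto simp: tridiag_def)

lemma sum_tridiag:
  fixes m :: "nat \<Rightarrow> 'a::field"
  assumes "j < n"
  shows "(\<Sum>i<n. m i * tridiag n a i j) = a * m j + path_adj n m j"
proof -
  have "(\<Sum>i<n. m i * tridiag n a i j) =
      (\<Sum>i<n. (if i = j then a * m i else 0) + (if i = j + 1 then m i else 0)
        + (if i + 1 = j then m i else 0))"
    using assms by (intro sum.cong) (auto simp: tridiag_def)
  also have "\<dots> = a * m j + (if j + 1 < n then m (j + 1) else 0)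
      + (\<Sum>i<n. if i = j - 1 \<and> 0 < j then m i else 0)"
    using assms by (simp add: sum.distrib) (intro sum.cong, auto)
  also have "(\<Sum>i<n. if i = j - 1 \<and> 0 < j then m i else 0) = (if 0 < j then m (j - 1) else 0)"
    using assms by (cases "0 < j") (simp_all add: sum.delta)
  finally show ?thesis by (simp add: path_adj_def add_ac)
qed

lemma sum_gen_matrix_left:
  assumes "j < n"
  shows "(\<Sum>i<n. m i * gen_matrix n a i j) = m j"
proof -
  have "(\<Sum>i<n. m i * gen_matrix n a i j) = (\<Sum>i<n. if i = j then m i else 0)"
    using assms by (intro sum.cong) (auto simp: gen_matrix_def)
  with assms show ?thesis by simp
qed

lemma sum_gen_matrix_right:
  assumes "j < n"
  shows "(\<Sum>i<n. m i * gen_matrix n a i (n + j)) = a * m j + path_adj n m j"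
  using sum_tridiag[OF assms] by (simp add: gen_matrix_def)

lemma sum_lessThan_add: "(\<Sum>j<n + (m::nat). f j) = (\<Sum>j<n. f j) + (\<Sum>j<m. f (n + j))"
  by (induction m) (auto simp: add_ac)

lemma sum_gen_matrix_row:
  fixes v :: "nat \<Rightarrow> 'a::field"
  assumes "k < n"
  shows "(\<Sum>j<2 * n. v j * gen_matrix n a k j) = v k + (a * v (n + k) + path_adj n (\<lambda>j. v (n + j)) k)"
proof -
  have "(\<Sum>j<2 * n. v j * gen_matrix n a k j) =
      (\<Sum>j<n. v j * gen_matrix n a k j) + (\<Sum>j<n. v (n + j) * gen_matrix n a k (n + j))"
    by (simp only: mult_2 sum_lessThan_add)
  also have "(\<Sum>j<n. v j * gen_matrix n a k j) = (\<Sum>j<n. if j = k then v j else 0)"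
    by (intro sum.cong) (auto simp: gen_matrix_def)
  also have "(\<Sum>j<n. v (n + j) * gen_matrix n a k (n + j)) = (\<Sum>j<n. v (n + j) * tridiag n a j k)"
    by (simp add: gen_matrix_def tridiag_sym)
  finally show ?thesis using assms sum_tridiag[OF assms, of "\<lambda>j. v (n + j)"] by simp
qed

lemma C_code_row_mem:
  assumes "k < n"
  shows "(\<lambda>j. if j < 2 * n then gen_matrix n a k j else 0) \<in> C_code n a"
proof -
  have "gen_matrix n a k j = (\<Sum>i<n. (if i = k then 1 else 0) * gen_matrix n a i j)" for j
    using assms by (simp add: if_distrib[of "\<lambda>x. x * _"] cong: if_cong)
  then show ?thesis unfolding C_code_def code_gen_def
    by (intro CollectI exI[of _ "\<lambda>i. if i = k then 1 else 0"]) auto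
qed

lemma C_code_dual_orthogonal_row:
  assumes "v \<in> dual_code (2 * n) (C_code n a)" and "k < n"
  shows "v k + (a * v (n + k) + path_adj n (\<lambda>j. v (n + j)) k) = 0"
proof -
  have "(\<Sum>j<2 * n. v j * (if j < 2 * n then gen_matrix n a k j else 0)) = 0"
    using assms C_code_row_mem[OF \<open>k < n\<close>, of a] unfolding dual_code_def by auto
  then show ?thesis by (simp add: sum_gen_matrix_row[OF \<open>k < n\<close>])
qed

lemma C_code_memE:
  assumes "c \<in> C_code n a"
  obtains m where "\<And>j. j < n \<Longrightarrow> c j = m j"
    and "\<And>j. j < n \<Longrightarrow> c (n + j) = a * m j + path_adj n m j"
    and "\<And>j. 2 * n \<le> j \<Longrightarrow> c j = 0"
proof -
  obtain m where c: "c = (\<lambda>j. if j < 2 * n then (\<Sum>i<n. m i * gen_matrix n a i j) else 0)"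
    using assms unfolding C_code_def code_gen_def by blast
  show thesis
    by (rule that[of m]) (auto simp: c sum_gen_matrix_left sum_gen_matrix_right)
qed

lemma is_LCD_C_code_one:
  fixes n :: nat
  assumes char2: "\<And>x::'a::field. x + x = 0" and "even n"
  shows "is_LCD (2 * n) (C_code n (1::'a))"
  unfolding is_LCD_def
proof (intro equalityI subsetI)
  fix c assume c: "c \<in> C_code n 1 \<inter> dual_code (2 * n) (C_code n (1::'a))"
  then obtain m where low: "\<And>j. j < n \<Longrightarrow> c j = m j"
    and high: "\<And>j. j < n \<Longrightarrow> c (n + j) = m j + path_adj n m j"
    and beyond: "\<And>j. 2 * n \<le> j \<Longrightarrow> c j = 0"
    by (auto elim: C_code_memE)
  define w where "w = path_adj n m"
  have "path_adj n w k = 0" if k: "k < n" for k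
  proof -
    have "path_adj n (\<lambda>j. c (n + j)) k = path_adj n (\<lambda>j. m j + w j) k"
      using high k unfolding w_def by (intro path_adj_cong) auto
    also have "\<dots> = w k + path_adj n w k"
      by (simp add: path_adj_add w_def)
    txt \<open>Orthogonality to row k of G reads m + T (T m) = 0 with T = I + P.\<close>
    finally have "(m k + m k) + (w k + w k) + path_adj n w k = 0"
      using C_code_dual_orthogonal_row[of c n 1 k] c k low[OF k] high[OF k]
      by (simp add: w_def add_ac)
    then show ?thesis by (simp add: char2)
  qed
  then have w0: "w j = 0" if "j < n" for j
    using path_adj_kernel_even_length[OF \<open>even n\<close>] that by blast
  then have m0: "m j = 0" if "j < n" for j
    using path_adj_kernel_even_length[OF \<open>even n\<close>, of m] that unfolding w_def by blast
  have "c j = 0" for j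
  proof (cases "j < n")
    case True
    then show ?thesis using low m0 by simp
  next
    case False
    then consider "2 * n \<le> j" | i where "j = n + i" "i < n"
      by (metis add_diff_inverse_nat le_add_diff_inverse2 mult_2 nat_add_left_cancel_less not_less)
    then show ?thesis
      by cases (use beyond high m0 w0 w_def in auto)
  qed
  then show "c \<in> {\<lambda>_. 0}" by auto
next
  fix c :: "nat \<Rightarrow> 'a" assume "c \<in> {\<lambda>_. 0}"
  moreover have "(\<lambda>_. 0) \<in> C_code n (1::'a)"
    unfolding C_code_def code_gen_def by (auto intro!: exI[of _ "\<lambda>_. 0"])
  ultimately show "c \<in> C_code n 1 \<inter> dual_code (2 * n) (C_code n 1)"
    by (simp add: dual_code_def)
qed

lemma CHAR_eq_2_if_card_pow2:
  assumes "card (UNIV :: 'a::{finite,field} set) = 2 ^ k"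
  shows "CHAR('a) = 2"
proof -
  have prime: "prime CHAR('a)"
    by (rule prime_CHAR_semidom[OF finite_imp_CHAR_pos]) simp
  moreover have "CHAR('a) dvd 2 ^ k"
    using CHAR_dvd_CARD[where 'a='a] assms by simp
  ultimately have "CHAR('a) dvd 2"
    by (rule prime_dvd_power)
  then have "CHAR('a) \<le> 2" by (rule dvd_imp_le) simp
  with prime_ge_2_nat[OF prime] show ?thesis by simp
qed

lemma add_self_eq_zero_if_CHAR_2:
  assumes "CHAR('a::comm_ring_1) = 2"
  shows "x + x = (0::'a)"
proof -
  have "(2::'a) = 0" using of_nat_CHAR[where 'a='a] by (simp add: assms)
  then show ?thesis by (metis mult_2 mult_zero_left)
qed

theorem corollary2p1:
  fixes n :: nat
  assumes q_pow2: "\<exists>k::nat. card (UNIV :: 'a set) = 2 ^ k"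
    and n_pos: "n \<ge> 1"
    and coprime: "gcd (n + 1) (card (UNIV :: 'a set)) = 1"
    and q_big: "real (card (UNIV :: 'a set)) > real n / 2"
  shows "\<exists>a::'a::{finite,field}. is_LCD (2 * n) (C_code n a)"
proof -
  obtain k where "card (UNIV :: 'a set) = 2 ^ k" using q_pow2 by blast
  then have char2: "CHAR('a) = 2" by (rule CHAR_eq_2_if_card_pow2)
  have "2 dvd card (UNIV :: 'a set)"
    using CHAR_dvd_CARD[where 'a='a] by (simp add: char2)
  with coprime have "odd (n + 1)"
    by (metis gcd_greatest odd_one)
  then have "even n" by simp
  have "is_LCD (2 * n) (C_code n (1::'a))"
    using is_LCD_C_code_one add_self_eq_zero_if_CHAR_2[OF char2] \<open>even n\<close> by blast
  then show ?thesis ..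
qed

end
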